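(* Let $R$ be a ring, $I$ a non-empty countable set, $D=\{\delta_i\mid i\in I\}$ a family of derivations of $R$, $X=\{x_i\mid i\in I\}$ a set of distinct non-commuting indeterminates, and $S=R[X;D]$. For $J\subseteq I$ put $X_J=\{x_i\mid i\in J\}$, $D_J=\{\delta_i\mid i\in J\}$ and $S_J=R[X_J;D_J]$. Then for every $J\subseteq I$, $S_J$ is both a right corner and a left corner of $S$. In particular, if $S$ is left (respectively right) quasi-duo, then $S_J$ is left (respectively right) quasi-duo for every subset $J\subseteq I$.
   Context: All rings are unital and associative. A derivation of $R$ is an additive map $\delta:R\to R$ with $\delta(rs)=r\delta(s)+\delta(r)s$. The differential polynomial ring in several indeterminates $R[X;D]$ is the set of all (noncommutative) polynomials in the indeterminates $x_i\in X$ (i.e. finite $R$-linear combinations $a_1t_1+\cdots+a_nt_n$ of monomials $t_k$, finite words in the alphabet $X$, coefficients written on the left), with natural addition and multiplication generated by the commutation rules $x_ia=ax_i+\delta_i(a)$ for $a\in R$, $i\in I$ (the $\delta_i$ need not be distinct). A subring $B$ of a ring $A$ (unital, possibly with $1_B\neq 1_A$) is a left corner of $A$ if there is an additive subgroup $C$ of $A$ with $A=B\oplus C$ and $BC\subseteq C$; it is a right corner if instead $CB\subseteq C$. A ring is left (right) quasi-duo if every maximal left (right) ideal is two-sided. *)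

theory Defs
  imports "HOL-Algebra.Ideal" "HOL-Library.Countable_Set"
begin

definition is_derivation :: "('a::ring_1 \<Rightarrow> 'a) \<Rightarrow> bool" where
  "is_derivation d \<longleftrightarrow> (\<forall>a b. d (a + b) = d a + d b) \<and> (\<forall>a b. d (a * b) = a * d b + d a * b)"

text \<open>An element is a finitely supported function from monomials (words over the
index set, i.e. lists of indices) to coefficients: p t is the (left) coefficient of
the monomial t.  Indeterminate x_i corresponds to the word [i].\<close>

definition dp_supp :: "('i list \<Rightarrow> 'a::zero) \<Rightarrow> 'i list set" where
  "dp_supp p = {t. p t \<noteq> 0}"

definition dp_monom :: "'i list \<Rightarrow> 'a::zero \<Rightarrow> 'i list \<Rightarrow> 'a" where
  "dp_monom t a = (\<lambda>u. if u = t then a else 0)"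

text \<open>Left multiplication by x_i: x_i (b s) = b (x_i s) + delta_i(b) s.\<close>
definition dp_xmul :: "('i \<Rightarrow> 'a::ring_1 \<Rightarrow> 'a) \<Rightarrow> 'i \<Rightarrow> ('i list \<Rightarrow> 'a) \<Rightarrow> 'i list \<Rightarrow> 'a" where
  "dp_xmul \<delta> i p = (\<lambda>u. (case u of [] \<Rightarrow> 0 | j # s \<Rightarrow> if j = i then p s else 0) + \<delta> i (p u))"

text \<open>The product (word t) * (coefficient a), expanded via the commutation rules.\<close>
fun dp_wmulc :: "('i \<Rightarrow> 'a::ring_1 \<Rightarrow> 'a) \<Rightarrow> 'i list \<Rightarrow> 'a \<Rightarrow> 'i list \<Rightarrow> 'a" where
  "dp_wmulc \<delta> [] a = dp_monom [] a"
| "dp_wmulc \<delta> (i # t) a = dp_xmul \<delta> i (dp_wmulc \<delta> t a)"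

text \<open>Right multiplication by a word s (appending s to every monomial).\<close>
definition dp_rword :: "('i list \<Rightarrow> 'a::zero) \<Rightarrow> 'i list \<Rightarrow> 'i list \<Rightarrow> 'a" where
  "dp_rword p s = (\<lambda>u. if length s \<le> length u \<and> drop (length u - length s) u = s
                         then p (take (length u - length s) u) else 0)"

text \<open>(a t)(b s) = a (t b) s, extended bilinearly.\<close>
definition dp_mult :: "('i \<Rightarrow> 'a::ring_1 \<Rightarrow> 'a) \<Rightarrow> ('i list \<Rightarrow> 'a) \<Rightarrow> ('i list \<Rightarrow> 'a) \<Rightarrow> 'i list \<Rightarrow> 'a" where
  "dp_mult \<delta> p q = (\<lambda>u. \<Sum>t\<in>dp_supp p. \<Sum>s\<in>dp_supp q.
                          p t * dp_rword (dp_wmulc \<delta> t (q s)) s u)"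

definition diffpoly :: "'i set \<Rightarrow> ('i \<Rightarrow> 'a::ring_1 \<Rightarrow> 'a) \<Rightarrow> ('i list \<Rightarrow> 'a) ring" where
  "diffpoly J \<delta> =
     \<lparr> carrier = {p. finite (dp_supp p) \<and> (\<forall>t\<in>dp_supp p. set t \<subseteq> J)},
       monoid.mult = dp_mult \<delta>,
       one = dp_monom [] 1,
       zero = (\<lambda>_. 0),
       add = (\<lambda>p q u. p u + q u) \<rparr>"

text \<open>B is a subring of A, unital in its own right but possibly with a different unit.\<close>
definition subring_nu :: "('b, 'm) ring_scheme \<Rightarrow> ('b, 'n) ring_scheme \<Rightarrow> bool" where
  "subring_nu A B \<longleftrightarrow> ring B \<and> carrier B \<subseteq> carrier A \<and>
     (\<forall>x\<in>carrier B. \<forall>y\<in>carrier B. x \<otimes>\<^bsub>B\<^esub> y = x \<otimes>\<^bsub>A\<^esub> y \<and> x \<oplus>\<^bsub>B\<^esub> y = x \<oplus>\<^bsub>A\<^esub> y)"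

definition direct_complement :: "('b, 'm) ring_scheme \<Rightarrow> ('b, 'n) ring_scheme \<Rightarrow> 'b set \<Rightarrow> bool" where
  "direct_complement A B C \<longleftrightarrow> additive_subgroup C A \<and>
     carrier A = {b \<oplus>\<^bsub>A\<^esub> c | b c. b \<in> carrier B \<and> c \<in> C} \<and>
     carrier B \<inter> C = {\<zero>\<^bsub>A\<^esub>}"

definition left_corner :: "('b, 'm) ring_scheme \<Rightarrow> ('b, 'n) ring_scheme \<Rightarrow> bool" where
  "left_corner A B \<longleftrightarrow> subring_nu A B \<and>
     (\<exists>C. direct_complement A B C \<and> (\<forall>b\<in>carrier B. \<forall>c\<in>C. b \<otimes>\<^bsub>A\<^esub> c \<in> C))"

definition right_corner :: "('b, 'm) ring_scheme \<Rightarrow> ('b, 'n) ring_scheme \<Rightarrow> bool" where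
  "right_corner A B \<longleftrightarrow> subring_nu A B \<and>
     (\<exists>C. direct_complement A B C \<and> (\<forall>b\<in>carrier B. \<forall>c\<in>C. c \<otimes>\<^bsub>A\<^esub> b \<in> C))"

definition left_ideal :: "('b, 'm) ring_scheme \<Rightarrow> 'b set \<Rightarrow> bool" where
  "left_ideal R L \<longleftrightarrow> additive_subgroup L R \<and> (\<forall>r\<in>carrier R. \<forall>x\<in>L. r \<otimes>\<^bsub>R\<^esub> x \<in> L)"

definition right_ideal :: "('b, 'm) ring_scheme \<Rightarrow> 'b set \<Rightarrow> bool" where
  "right_ideal R L \<longleftrightarrow> additive_subgroup L R \<and> (\<forall>r\<in>carrier R. \<forall>x\<in>L. x \<otimes>\<^bsub>R\<^esub> r \<in> L)"

definition maximal_left_ideal :: "('b, 'm) ring_scheme \<Rightarrow> 'b set \<Rightarrow> bool" where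
  "maximal_left_ideal R L \<longleftrightarrow> left_ideal R L \<and> L \<noteq> carrier R \<and>
     (\<forall>M. left_ideal R M \<and> L \<subseteq> M \<longrightarrow> M = L \<or> M = carrier R)"

definition maximal_right_ideal :: "('b, 'm) ring_scheme \<Rightarrow> 'b set \<Rightarrow> bool" where
  "maximal_right_ideal R L \<longleftrightarrow> right_ideal R L \<and> L \<noteq> carrier R \<and>
     (\<forall>M. right_ideal R M \<and> L \<subseteq> M \<longrightarrow> M = L \<or> M = carrier R)"

definition left_quasi_duo :: "('b, 'm) ring_scheme \<Rightarrow> bool" where
  "left_quasi_duo R \<longleftrightarrow> (\<forall>L. maximal_left_ideal R L \<longrightarrow> right_ideal R L)"

definition right_quasi_duo :: "('b, 'm) ring_scheme \<Rightarrow> bool" where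
  "right_quasi_duo R \<longleftrightarrow> (\<forall>L. maximal_right_ideal R L \<longrightarrow> left_ideal R L)"

end

(*
  Writing elements of S with coefficients on the
  left, those all of whose monomials involve some x\<^sub>i with i \<notin> J form a left ideal C of S,
  and S = S\<^sub>J \<oplus> C; so S\<^sub>J is a left corner. Every element of S can also be written uniquely
  as \<Sum> x\<^sub>w b\<^sub>w with coefficients on the right (rewriting a x\<^sub>i = x\<^sub>i a - \<delta>\<^sub>i(a) is
  triangular with respect to word length); those all of whose words w leave J form a right
  ideal complementing S\<^sub>J, so S\<^sub>J is a right corner.

  If A = B \<oplus> C is a right corner with the same unit and M is a maximal left ideal of B, the
  largest left ideal of A inside M \<oplus> C contains M and misses 1. By Zorn it lies in a maximal
  left ideal L; if A is left quasi-duo, L is two-sided, and L \<inter> B = M by maximality, so M is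
  two-sided. Left corners and right quasi-duo rings reduce to this via opposite rings.
*)

theory Submission
  imports Defs "HOL-Library.Function_Algebras"
begin

section \<open>Corners and quasi-duo rings\<close>

lemma (in abelian_group) additive_subgroup_iff:
  "additive_subgroup H G \<longleftrightarrow>
    H \<subseteq> carrier G \<and> \<zero> \<in> H \<and> (\<forall>x\<in>H. \<forall>y\<in>H. x \<oplus> y \<in> H) \<and> (\<forall>x\<in>H. \<ominus> x \<in> H)"
proof
  assume "additive_subgroup H G"
  then interpret H: additive_subgroup H G .
  show "H \<subseteq> carrier G \<and> \<zero> \<in> H \<and> (\<forall>x\<in>H. \<forall>y\<in>H. x \<oplus> y \<in> H) \<and> (\<forall>x\<in>H. \<ominus> x \<in> H)"
    using H.a_subset by auto
next
  assume "H \<subseteq> carrier G \<and> \<zero> \<in> H \<and> (\<forall>x\<in>H. \<forall>y\<in>H. x \<oplus> y \<in> H) \<and> (\<forall>x\<in>H. \<ominus> x \<in> H)"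
  then show "additive_subgroup H G"
    by (intro additive_subgroupI subgroup.intro) (auto simp: a_inv_def[symmetric])
qed

lemma subring_nu_zero:
  assumes "ring A" "subring_nu A B"
  shows "\<zero>\<^bsub>B\<^esub> = \<zero>\<^bsub>A\<^esub>"
proof -
  interpret A: ring A by fact
  interpret B: ring B using assms(2) by (simp add: subring_nu_def)
  have "\<zero>\<^bsub>B\<^esub> \<oplus>\<^bsub>A\<^esub> \<zero>\<^bsub>B\<^esub> = \<zero>\<^bsub>B\<^esub> \<oplus>\<^bsub>B\<^esub> \<zero>\<^bsub>B\<^esub>"
    using assms(2) by (simp add: subring_nu_def)
  moreover have "\<zero>\<^bsub>B\<^esub> \<in> carrier A" using assms(2) by (auto simp: subring_nu_def)
  ultimately show ?thesis by simp
qed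

lemma subring_nu_ops:
  assumes "ring A" "subring_nu A B" "x \<in> carrier B" "y \<in> carrier B"
  shows "x \<oplus>\<^bsub>A\<^esub> y = x \<oplus>\<^bsub>B\<^esub> y" and "x \<otimes>\<^bsub>A\<^esub> y = x \<otimes>\<^bsub>B\<^esub> y"
    and "\<ominus>\<^bsub>A\<^esub> x = \<ominus>\<^bsub>B\<^esub> x"
proof -
  show "x \<oplus>\<^bsub>A\<^esub> y = x \<oplus>\<^bsub>B\<^esub> y" and "x \<otimes>\<^bsub>A\<^esub> y = x \<otimes>\<^bsub>B\<^esub> y"
    using assms(2-4) by (simp_all add: subring_nu_def)
  interpret A: ring A by fact
  interpret B: ring B using assms(2) by (simp add: subring_nu_def)
  have "\<ominus>\<^bsub>B\<^esub> x \<oplus>\<^bsub>A\<^esub> x = \<ominus>\<^bsub>B\<^esub> x \<oplus>\<^bsub>B\<^esub> x"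
    using assms(2,3) by (simp add: subring_nu_def)
  then have "\<ominus>\<^bsub>B\<^esub> x \<oplus>\<^bsub>A\<^esub> x = \<zero>\<^bsub>A\<^esub>"
    using assms(3) subring_nu_zero[OF assms(1,2)] by (simp add: B.l_neg)
  moreover have "\<ominus>\<^bsub>B\<^esub> x \<in> carrier A" "x \<in> carrier A"
    using assms(2,3) by (auto simp: subring_nu_def)
  ultimately show "\<ominus>\<^bsub>A\<^esub> x = \<ominus>\<^bsub>B\<^esub> x"
    by (simp add: A.minus_equality)
qed

lemma subring_nu_closed:
  assumes "ring A" "subring_nu A B" "x \<in> carrier B" "y \<in> carrier B"
  shows "x \<oplus>\<^bsub>A\<^esub> y \<in> carrier B" "x \<otimes>\<^bsub>A\<^esub> y \<in> carrier B" "\<ominus>\<^bsub>A\<^esub> x \<in> carrier B"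
proof -
  interpret B: ring B using assms(2) by (simp add: subring_nu_def)
  show "x \<oplus>\<^bsub>A\<^esub> y \<in> carrier B" "x \<otimes>\<^bsub>A\<^esub> y \<in> carrier B" "\<ominus>\<^bsub>A\<^esub> x \<in> carrier B"
    using assms by (simp_all add: subring_nu_ops)
qed

lemma additive_subgroup_subring_nu:
  assumes A: "ring A" and sub: "subring_nu A B" and H: "additive_subgroup H B"
  shows "additive_subgroup H A"
proof -
  interpret A: ring A by fact
  interpret B: ring B using sub by (simp add: subring_nu_def)
  have HB: "H \<subseteq> carrier B" using H by (simp add: B.additive_subgroup_iff)
  then have "H \<subseteq> carrier A" using sub by (auto simp: subring_nu_def)
  with H HB show ?thesis
    unfolding A.additive_subgroup_iff B.additive_subgroup_iff
    by (auto simp: subring_nu_ops[OF A sub] subring_nu_zero[OF A sub, symmetric] subsetD)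
qed

lemma left_ideal_Int_subring_nu:
  assumes A: "ring A" and sub: "subring_nu A B" and L: "left_ideal A L"
  shows "left_ideal B (L \<inter> carrier B)"
proof -
  interpret A: ring A by fact
  interpret B: ring B using sub by (simp add: subring_nu_def)
  have "carrier B \<subseteq> carrier A" using sub by (simp add: subring_nu_def)
  moreover have "\<zero>\<^bsub>A\<^esub> \<in> carrier B" using B.zero_closed by (simp add: subring_nu_zero[OF A sub])
  ultimately show ?thesis using L
    unfolding left_ideal_def A.additive_subgroup_iff B.additive_subgroup_iff
    by (auto simp: subring_nu_ops[OF A sub, symmetric] subring_nu_zero[OF A sub]
        subring_nu_closed[OF A sub] subsetD)
qed

lemma (in ring) left_ideal_one_iff:
  assumes "left_ideal R L"
  shows "\<one> \<in> L \<longleftrightarrow> L = carrier R"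
proof
  assume one: "\<one> \<in> L"
  have "r \<in> L" if "r \<in> carrier R" for r
    using assms one that r_one[OF that] unfolding left_ideal_def by metis
  moreover have "L \<subseteq> carrier R" using assms by (simp add: left_ideal_def additive_subgroup_iff)
  ultimately show "L = carrier R" by blast
qed simp

lemma (in ring) left_ideal_Union_chain:
  assumes "\<C> \<noteq> {}" and chain: "subset.chain {L. left_ideal R L} \<C>"
  shows "left_ideal R (\<Union>\<C>)"
proof -
  have ideal: "L \<subseteq> carrier R" "\<zero> \<in> L" "\<And>x y. x \<in> L \<Longrightarrow> y \<in> L \<Longrightarrow> x \<oplus> y \<in> L"
    "\<And>x. x \<in> L \<Longrightarrow> \<ominus> x \<in> L" "\<And>r x. r \<in> carrier R \<Longrightarrow> x \<in> L \<Longrightarrow> r \<otimes> x \<in> L"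
    if "L \<in> \<C>" for L
    using that chain by (auto simp: subset.chain_def left_ideal_def additive_subgroup_iff)
  have common: "\<exists>L\<in>\<C>. x \<in> L \<and> y \<in> L" if "x \<in> \<Union>\<C>" "y \<in> \<Union>\<C>" for x y
    using that chain unfolding subset.chain_def by blast
  show ?thesis
    unfolding left_ideal_def additive_subgroup_iff
  proof (intro conjI ballI)
    show "\<Union>\<C> \<subseteq> carrier R" using ideal(1) by blast
    obtain L where "L \<in> \<C>" using \<open>\<C> \<noteq> {}\<close> by blast
    then show "\<zero> \<in> \<Union>\<C>" using ideal(2) by blast
  next
    fix x y assume "x \<in> \<Union>\<C>" "y \<in> \<Union>\<C>"
    with common obtain L where "L \<in> \<C>" "x \<in> L" "y \<in> L" by blast
    then show "x \<oplus> y \<in> \<Union>\<C>" using ideal(3) by blast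
  next
    fix x assume "x \<in> \<Union>\<C>"
    then show "\<ominus> x \<in> \<Union>\<C>" using ideal(4) by blast
  next
    fix r x assume "r \<in> carrier R" "x \<in> \<Union>\<C>"
    then show "r \<otimes> x \<in> \<Union>\<C>" using ideal(5) by blast
  qed
qed

lemma (in ring) left_ideal_extends_to_maximal:
  assumes N: "left_ideal R N" "\<one> \<notin> N"
  shows "\<exists>L. maximal_left_ideal R L \<and> N \<subseteq> L"
proof -
  let ?F = "{L. left_ideal R L \<and> N \<subseteq> L \<and> \<one> \<notin> L}"
  have "\<exists>L\<in>?F. \<forall>L'\<in>?F. L \<subseteq> L' \<longrightarrow> L' = L"
  proof (rule subset_Zorn_nonempty)
    fix \<C> assume "\<C> \<noteq> {}" and chain: "subset.chain ?F \<C>"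
    then have "\<C> \<subseteq> ?F" by (simp add: subset.chain_def)
    have "subset.chain {L. left_ideal R L} \<C>"
      using chain by (auto simp: subset.chain_def)
    with \<open>\<C> \<noteq> {}\<close> have "left_ideal R (\<Union>\<C>)" by (rule left_ideal_Union_chain)
    moreover have "N \<subseteq> \<Union>\<C>" using \<open>\<C> \<noteq> {}\<close> \<open>\<C> \<subseteq> ?F\<close> by blast
    moreover have "\<one> \<notin> \<Union>\<C>" using \<open>\<C> \<subseteq> ?F\<close> by blast
    ultimately show "\<Union>\<C> \<in> ?F" by blast
  next
    show "?F \<noteq> {}" using N by blast
  qed
  then obtain L where L: "L \<in> ?F" and max: "\<forall>L'\<in>?F. L \<subseteq> L' \<longrightarrow> L' = L"
    by (rule bexE)
  have "maximal_left_ideal R L"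
    unfolding maximal_left_ideal_def
  proof (intro conjI allI impI)
    show "left_ideal R L" using L by simp
    show "L \<noteq> carrier R" using L one_closed by blast
  next
    fix M assume M: "left_ideal R M \<and> L \<subseteq> M"
    show "M = L \<or> M = carrier R"
    proof (cases "\<one> \<in> M")
      case True
      then show ?thesis using left_ideal_one_iff[of M] M by simp
    next
      case False
      with M L have "M \<in> ?F" by auto
      then show ?thesis using M max by simp
    qed
  qed
  with L show ?thesis by auto
qed

lemma (in ring) left_ideal_left_core:
  assumes "additive_subgroup P R"
  shows "left_ideal R {x \<in> carrier R. \<forall>a\<in>carrier R. a \<otimes> x \<in> P}"
  using assms
  unfolding left_ideal_def additive_subgroup_iff
  by (auto simp: r_distr r_minus m_assoc[symmetric])

lemma one_notin_set_add_complement: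
  assumes A: "ring A" and sub: "subring_nu A B" and dc: "direct_complement A B C"
    and one: "\<one>\<^bsub>B\<^esub> = \<one>\<^bsub>A\<^esub>" and M: "additive_subgroup M B" "\<one>\<^bsub>B\<^esub> \<notin> M"
  shows "\<one>\<^bsub>A\<^esub> \<notin> M <+>\<^bsub>A\<^esub> C"
proof
  interpret A: ring A by fact
  interpret B: ring B using sub by (simp add: subring_nu_def)
  have MB: "M \<subseteq> carrier B" using M(1) by (simp add: B.additive_subgroup_iff)
  have C: "C \<subseteq> carrier A" "carrier B \<inter> C = {\<zero>\<^bsub>A\<^esub>}"
    using dc by (auto simp: direct_complement_def A.additive_subgroup_iff)
  assume "\<one>\<^bsub>A\<^esub> \<in> M <+>\<^bsub>A\<^esub> C"
  then obtain m c where mc: "m \<in> M" "c \<in> C" "\<one>\<^bsub>A\<^esub> = m \<oplus>\<^bsub>A\<^esub> c"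
    by (auto simp: set_add_def')
  have m: "m \<in> carrier B" "m \<in> carrier A" using mc(1) MB sub by (auto simp: subring_nu_def)
  have "c \<in> carrier A" using mc(2) C(1) by blast
  then have "c = \<ominus>\<^bsub>A\<^esub> m \<oplus>\<^bsub>A\<^esub> \<one>\<^bsub>A\<^esub>"
    using mc(3) m(2) by (simp add: A.a_assoc[symmetric] A.l_neg)
  also have "\<dots> = \<ominus>\<^bsub>B\<^esub> m \<oplus>\<^bsub>B\<^esub> \<one>\<^bsub>B\<^esub>"
    using m one B.one_closed by (simp add: subring_nu_ops[OF A sub])
  finally have "c \<in> carrier B" using m by simp
  with mc(2) C(2) have "c = \<zero>\<^bsub>A\<^esub>" by blast
  with mc m one have "\<one>\<^bsub>B\<^esub> \<in> M" by simp
  with M(2) show False by contradiction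
qed

lemma left_ideal_beyond_right_corner:
  assumes A: "ring A" and corner: "right_corner A B" and one: "\<one>\<^bsub>B\<^esub> = \<one>\<^bsub>A\<^esub>"
    and M: "maximal_left_ideal B M"
  shows "\<exists>N. left_ideal A N \<and> M \<subseteq> N \<and> \<one>\<^bsub>A\<^esub> \<notin> N"
proof -
  interpret A: ring A by fact
  obtain C where sub: "subring_nu A B" and dc: "direct_complement A B C"
    and CB: "\<And>b c. b \<in> carrier B \<Longrightarrow> c \<in> C \<Longrightarrow> c \<otimes>\<^bsub>A\<^esub> b \<in> C"
    using corner by (auto simp: right_corner_def)
  interpret B: ring B using sub by (simp add: subring_nu_def)
  have Ml: "left_ideal B M" and "M \<noteq> carrier B" using M by (simp_all add: maximal_left_ideal_def)
  then have M1: "\<one>\<^bsub>B\<^esub> \<notin> M" using B.left_ideal_one_iff by blast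
  have MB: "additive_subgroup M B" "M \<subseteq> carrier B"
    using Ml by (simp_all add: left_ideal_def B.additive_subgroup_iff)
  let ?P = "M <+>\<^bsub>A\<^esub> C"
  \<comment> \<open>the largest left ideal of \<open>A\<close> inside \<open>M \<oplus> C\<close>; it contains \<open>M\<close> because \<open>C B \<subseteq> C\<close>\<close>
  define N where "N = {x \<in> carrier A. \<forall>a\<in>carrier A. a \<otimes>\<^bsub>A\<^esub> x \<in> ?P}"
  have "additive_subgroup ?P A"
    using dc additive_subgroup_subring_nu[OF A sub MB(1)]
    by (intro A.add_additive_subgroups) (simp_all add: direct_complement_def)
  then have "left_ideal A N" unfolding N_def by (rule A.left_ideal_left_core)
  moreover have "M \<subseteq> N"
  proof
    fix m assume m: "m \<in> M"
    then have mB: "m \<in> carrier B" "m \<in> carrier A" using MB(2) sub by (auto simp: subring_nu_def)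
    have "a \<otimes>\<^bsub>A\<^esub> m \<in> ?P" if "a \<in> carrier A" for a
    proof -
      have "a \<in> {b \<oplus>\<^bsub>A\<^esub> c |b c. b \<in> carrier B \<and> c \<in> C}"
        using that dc by (simp add: direct_complement_def)
      then obtain b c where bc: "a = b \<oplus>\<^bsub>A\<^esub> c" "b \<in> carrier B" "c \<in> C"
        by blast
      have "b \<in> carrier A" "c \<in> carrier A"
        using bc sub dc by (auto simp: subring_nu_def direct_complement_def A.additive_subgroup_iff)
      then have "a \<otimes>\<^bsub>A\<^esub> m = b \<otimes>\<^bsub>B\<^esub> m \<oplus>\<^bsub>A\<^esub> c \<otimes>\<^bsub>A\<^esub> m"
        using bc mB by (simp add: A.l_distr subring_nu_ops[OF A sub])
      moreover have "b \<otimes>\<^bsub>B\<^esub> m \<in> M" using Ml bc(2) m by (simp add: left_ideal_def)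
      moreover have "c \<otimes>\<^bsub>A\<^esub> m \<in> C" using CB mB(1) bc(3) .
      ultimately show ?thesis by (auto simp: set_add_def')
    qed
    with mB show "m \<in> N" by (simp add: N_def)
  qed
  moreover have "\<one>\<^bsub>A\<^esub> \<notin> N"
    using one_notin_set_add_complement[OF A sub dc one MB(1) M1] by (auto simp: N_def)
  ultimately show ?thesis by blast
qed

lemma left_quasi_duo_right_corner:
  assumes A: "ring A" and corner: "right_corner A B" and one: "\<one>\<^bsub>B\<^esub> = \<one>\<^bsub>A\<^esub>"
    and qd: "left_quasi_duo A"
  shows "left_quasi_duo B"
  unfolding left_quasi_duo_def
proof (intro allI impI)
  fix M assume M: "maximal_left_ideal B M"
  interpret A: ring A by fact
  have sub: "subring_nu A B" using corner by (simp add: right_corner_def)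
  interpret B: ring B using sub by (simp add: subring_nu_def)
  obtain N where N: "left_ideal A N" "M \<subseteq> N" "\<one>\<^bsub>A\<^esub> \<notin> N"
    using left_ideal_beyond_right_corner[OF A corner one M] by blast
  then obtain L where L: "maximal_left_ideal A L" "N \<subseteq> L"
    using A.left_ideal_extends_to_maximal by blast
  then have "left_ideal A L" "right_ideal A L" "\<one>\<^bsub>A\<^esub> \<notin> L"
    using qd A.left_ideal_one_iff by (auto simp: left_quasi_duo_def maximal_left_ideal_def)
  have "L \<inter> carrier B = M"
  proof -
    have "left_ideal B (L \<inter> carrier B)"
      by (rule left_ideal_Int_subring_nu[OF A sub \<open>left_ideal A L\<close>])
    moreover have "M \<subseteq> L \<inter> carrier B"
      using M N(2) L(2)
      by (auto simp: maximal_left_ideal_def left_ideal_def B.additive_subgroup_iff)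
    moreover have "L \<inter> carrier B \<noteq> carrier B"
      using \<open>\<one>\<^bsub>A\<^esub> \<notin> L\<close> one B.one_closed by auto
    ultimately show ?thesis using M by (auto simp: maximal_left_ideal_def)
  qed
  show "right_ideal B M"
    unfolding right_ideal_def
  proof (intro conjI ballI)
    show "additive_subgroup M B" using M by (simp add: maximal_left_ideal_def left_ideal_def)
  next
    fix r x assume "r \<in> carrier B" "x \<in> M"
    moreover have "carrier B \<subseteq> carrier A" using sub by (simp add: subring_nu_def)
    ultimately show "x \<otimes>\<^bsub>B\<^esub> r \<in> M"
      using \<open>right_ideal A L\<close> \<open>L \<inter> carrier B = M\<close>
      by (auto simp: right_ideal_def subring_nu_ops[OF A sub, symmetric]
          subring_nu_closed[OF A sub])
  qed
qed

definition opposite_ring :: "('a, 'm) ring_scheme \<Rightarrow> ('a, 'm) ring_scheme" where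
  "opposite_ring A = A\<lparr>mult := \<lambda>x y. y \<otimes>\<^bsub>A\<^esub> x\<rparr>"

lemma opposite_ring_simps [simp]:
  "carrier (opposite_ring A) = carrier A"
  "x \<otimes>\<^bsub>opposite_ring A\<^esub> y = y \<otimes>\<^bsub>A\<^esub> x"
  "\<one>\<^bsub>opposite_ring A\<^esub> = \<one>\<^bsub>A\<^esub>"
  "\<zero>\<^bsub>opposite_ring A\<^esub> = \<zero>\<^bsub>A\<^esub>"
  "add (opposite_ring A) = add A"
  by (simp_all add: opposite_ring_def)

lemma additive_subgroup_opposite_ring [simp]:
  "additive_subgroup H (opposite_ring A) \<longleftrightarrow> additive_subgroup H A"
  by (simp add: additive_subgroup_def)

lemma ring_opposite_ring:
  assumes "ring A"
  shows "ring (opposite_ring A)"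
proof -
  interpret ring A by fact
  have "abelian_group (opposite_ring A)"
    using is_abelian_group
    by (simp add: abelian_group_def abelian_monoid_def abelian_group_axioms_def)
  moreover have "monoid (opposite_ring A)"
    by (rule monoidI) (simp_all add: m_assoc)
  ultimately show ?thesis
    by (intro ringI) (simp_all add: l_distr r_distr)
qed

lemma opposite_ring_iff [simp]:
  "left_ideal (opposite_ring A) L \<longleftrightarrow> right_ideal A L"
  "right_ideal (opposite_ring A) L \<longleftrightarrow> left_ideal A L"
  "maximal_left_ideal (opposite_ring A) L \<longleftrightarrow> maximal_right_ideal A L"
  "maximal_right_ideal (opposite_ring A) L \<longleftrightarrow> maximal_left_ideal A L"
  "left_quasi_duo (opposite_ring A) \<longleftrightarrow> right_quasi_duo A"
  "right_quasi_duo (opposite_ring A) \<longleftrightarrow> left_quasi_duo A"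
  by (simp_all add: left_ideal_def right_ideal_def maximal_left_ideal_def maximal_right_ideal_def
      left_quasi_duo_def right_quasi_duo_def)

lemma subring_nu_opposite_ring:
  "subring_nu A B \<Longrightarrow> subring_nu (opposite_ring A) (opposite_ring B)"
  by (simp add: subring_nu_def ring_opposite_ring)

lemma left_corner_opposite_ring:
  "left_corner A B \<Longrightarrow> right_corner (opposite_ring A) (opposite_ring B)"
  by (simp add: left_corner_def right_corner_def direct_complement_def subring_nu_opposite_ring)

lemma right_quasi_duo_left_corner:
  assumes "ring A" "left_corner A B" "\<one>\<^bsub>B\<^esub> = \<one>\<^bsub>A\<^esub>" "right_quasi_duo A"
  shows "right_quasi_duo B"
  using left_quasi_duo_right_corner[OF ring_opposite_ring left_corner_opposite_ring] assms by simp

definition derivations_on :: "'i set \<Rightarrow> ('i \<Rightarrow> 'a::ring_1 \<Rightarrow> 'a) \<Rightarrow> bool" where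
  "derivations_on K \<delta> \<longleftrightarrow> (\<forall>i\<in>K. is_derivation (\<delta> i))"

lemma derivations_on_mono: "derivations_on K \<delta> \<Longrightarrow> J \<subseteq> K \<Longrightarrow> derivations_on J \<delta>"
  by (auto simp: derivations_on_def)

lemma derivation_add: "is_derivation d \<Longrightarrow> d (a + b) = d a + d b"
  by (simp add: is_derivation_def)

lemma derivation_mult: "is_derivation d \<Longrightarrow> d (a * b) = a * d b + d a * b"
  by (simp add: is_derivation_def)

lemma derivation_zero: "is_derivation d \<Longrightarrow> d 0 = 0"
  using derivation_add[of d 0 0] by simp

lemma derivation_one: "is_derivation d \<Longrightarrow> d (1::'a::ring_1) = 0"
  using derivation_mult[of d 1 1] by simp

lemma sum_fun_apply: "(\<Sum>k\<in>F. g k) x = (\<Sum>k\<in>F. g k x)"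
  by (induction F rule: infinite_finite_induct) auto

definition dp_smult :: "'a::times \<Rightarrow> ('b \<Rightarrow> 'a) \<Rightarrow> 'b \<Rightarrow> 'a" where
  "dp_smult a f = (\<lambda>u. a * f u)"

definition dp_polys :: "'i set \<Rightarrow> ('i list \<Rightarrow> 'a::zero) set" where
  "dp_polys K = {p. finite (dp_supp p) \<and> (\<forall>t\<in>dp_supp p. set t \<subseteq> K)}"

lemma dp_supp_zero [simp]: "dp_supp 0 = {}"
  by (simp add: dp_supp_def)

lemma dp_supp_eq_empty_iff: "dp_supp p = {} \<longleftrightarrow> p = 0"
  by (auto simp: dp_supp_def fun_eq_iff)

lemma dp_supp_add: "dp_supp (f + g) \<subseteq> dp_supp f \<union> dp_supp (g :: _ \<Rightarrow> 'a::monoid_add)"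
  by (auto simp: dp_supp_def)

lemma dp_supp_diff: "dp_supp (f - g) \<subseteq> dp_supp f \<union> dp_supp (g :: _ \<Rightarrow> 'a::group_add)"
  by (auto simp: dp_supp_def)

lemma dp_supp_uminus [simp]: "dp_supp (- f) = dp_supp (f :: _ \<Rightarrow> 'a::group_add)"
  by (simp add: dp_supp_def)

lemma dp_supp_sum: "dp_supp (\<Sum>k\<in>F. g k) \<subseteq> (\<Union>k\<in>F. dp_supp (g k :: _ \<Rightarrow> 'a::comm_monoid_add))"
proof (induction F rule: infinite_finite_induct)
  case (insert x F)
  have "dp_supp (sum g (insert x F)) \<subseteq> dp_supp (g x) \<union> dp_supp (sum g F)"
    by (simp only: sum.insert[OF insert.hyps] dp_supp_add)
  with insert.IH show ?case by blast
qed (auto simp: dp_supp_def)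

lemma dp_supp_smult: "dp_supp (dp_smult a f) \<subseteq> dp_supp (f :: _ \<Rightarrow> 'a::mult_zero)"
  by (auto simp: dp_supp_def dp_smult_def)

lemma dp_supp_monom: "dp_supp (dp_monom t a) \<subseteq> {t}"
  by (auto simp: dp_supp_def dp_monom_def)

lemma finite_dp_supp_monom [simp]: "finite (dp_supp (dp_monom t a))"
  using dp_supp_monom by (rule finite_subset) simp

lemma dp_polys_zero [simp]: "0 \<in> dp_polys K"
  by (simp add: dp_polys_def)

lemma dp_polys_add:
  "p \<in> dp_polys K \<Longrightarrow> q \<in> dp_polys K \<Longrightarrow> p + (q :: _ \<Rightarrow> 'a::monoid_add) \<in> dp_polys K"
  unfolding dp_polys_def using dp_supp_add[of p q] by (auto intro: finite_subset)

lemma dp_polys_uminus: "p \<in> dp_polys K \<Longrightarrow> - (p :: _ \<Rightarrow> 'a::group_add) \<in> dp_polys K"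
  by (simp add: dp_polys_def)

lemma dp_polys_diff:
  "p \<in> dp_polys K \<Longrightarrow> q \<in> dp_polys K \<Longrightarrow> p - (q :: _ \<Rightarrow> 'a::group_add) \<in> dp_polys K"
  using dp_polys_add[of p K "- q"] by (simp add: dp_polys_uminus)

lemma dp_polys_sum:
  "(\<And>k. k \<in> F \<Longrightarrow> g k \<in> dp_polys K) \<Longrightarrow> (\<Sum>k\<in>F. g k :: _ \<Rightarrow> 'a::comm_monoid_add) \<in> dp_polys K"
  by (induction F rule: infinite_finite_induct) (auto simp: dp_polys_add)

lemma dp_polys_smult: "p \<in> dp_polys K \<Longrightarrow> dp_smult a (p :: _ \<Rightarrow> 'a::mult_zero) \<in> dp_polys K"
  unfolding dp_polys_def using dp_supp_smult[of a p] by (auto intro: finite_subset)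

lemma dp_polys_monom: "set t \<subseteq> K \<Longrightarrow> dp_monom t a \<in> dp_polys K"
  using dp_supp_monom[of t a] by (auto simp: dp_polys_def intro: finite_subset)

lemma dp_polys_mono: "p \<in> dp_polys J \<Longrightarrow> J \<subseteq> K \<Longrightarrow> p \<in> dp_polys K"
  by (auto simp: dp_polys_def)

lemma dp_polys_restrict: "p \<in> dp_polys K \<Longrightarrow> (\<lambda>u. if set u \<subseteq> J then p u else 0) \<in> dp_polys J"
  by (auto simp: dp_polys_def dp_supp_def intro: finite_subset)

lemma dp_monom_decomp: "finite (dp_supp r) \<Longrightarrow> r = (\<Sum>s\<in>dp_supp r. dp_monom s (r s))"
  by (auto simp: fun_eq_iff sum_fun_apply dp_monom_def dp_supp_def)

lemma dp_smult_add: "dp_smult a (f + g) = dp_smult a f + dp_smult a (g :: _ \<Rightarrow> 'a::ring_1)"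
  by (simp add: dp_smult_def fun_eq_iff algebra_simps)

lemma dp_smult_add_left: "dp_smult (a + b) f = dp_smult a f + dp_smult b (f :: _ \<Rightarrow> 'a::ring_1)"
  by (simp add: dp_smult_def fun_eq_iff algebra_simps)

lemma dp_smult_smult: "dp_smult a (dp_smult b f) = dp_smult (a * b) (f :: _ \<Rightarrow> 'a::ring_1)"
  by (simp add: dp_smult_def mult.assoc)

lemma dp_smult_sum: "dp_smult a (\<Sum>k\<in>F. g k) = (\<Sum>k\<in>F. dp_smult a (g k :: _ \<Rightarrow> 'a::ring_1))"
  by (simp add: dp_smult_def fun_eq_iff sum_fun_apply sum_distrib_left)

definition dp_cons :: "'i \<Rightarrow> ('i list \<Rightarrow> 'a::zero) \<Rightarrow> 'i list \<Rightarrow> 'a" where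
  "dp_cons i f u = (case u of [] \<Rightarrow> 0 | j # v \<Rightarrow> if j = i then f v else 0)"

lemma dp_cons_Nil [simp]: "dp_cons i f [] = 0"
  by (simp add: dp_cons_def)

lemma dp_cons_Cons [simp]: "dp_cons i f (j # v) = (if j = i then f v else 0)"
  by (simp add: dp_cons_def)

lemma dp_cons_add: "dp_cons i (f + g) = dp_cons i f + dp_cons i (g :: _ \<Rightarrow> 'a::monoid_add)"
  by (simp add: fun_eq_iff dp_cons_def split: list.split)

lemma dp_cons_zero: "dp_cons i 0 = (0 :: _ \<Rightarrow> 'a::zero)"
  by (simp add: fun_eq_iff dp_cons_def split: list.split)

lemma dp_cons_sum: "dp_cons i (\<Sum>k\<in>F. g k) = (\<Sum>k\<in>F. dp_cons i (g k :: _ \<Rightarrow> 'a::comm_monoid_add))"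
  using sum_comp_morphism[of "dp_cons i" g F] by (simp add: dp_cons_add dp_cons_zero comp_def)

lemma dp_supp_cons: "dp_supp (dp_cons i f) = Cons i ` dp_supp f"
  by (auto simp: dp_supp_def dp_cons_def neq_Nil_conv split: list.splits)

lemma dp_polys_cons: "i \<in> K \<Longrightarrow> p \<in> dp_polys K \<Longrightarrow> dp_cons i p \<in> dp_polys K"
  by (auto simp: dp_polys_def dp_supp_cons)

lemma dp_xmul_eq: "dp_xmul \<delta> i p = dp_cons i p + (\<delta> i \<circ> p)"
  by (simp add: fun_eq_iff dp_xmul_def dp_cons_def)

lemma dp_supp_comp_derivation: "is_derivation d \<Longrightarrow> dp_supp (d \<circ> p) \<subseteq> dp_supp p"
  by (auto simp: dp_supp_def derivation_zero)

lemma dp_polys_comp_derivation: "is_derivation d \<Longrightarrow> p \<in> dp_polys K \<Longrightarrow> d \<circ> p \<in> dp_polys K"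
  using dp_supp_comp_derivation[of d p] by (auto simp: dp_polys_def intro: finite_subset)

lemma dp_xmul_add:
  "is_derivation (\<delta> i) \<Longrightarrow> dp_xmul \<delta> i (f + g) = dp_xmul \<delta> i f + dp_xmul \<delta> i g"
  by (simp add: fun_eq_iff dp_xmul_def derivation_add split: list.split)

lemma dp_xmul_zero: "is_derivation (\<delta> i) \<Longrightarrow> dp_xmul \<delta> i 0 = 0"
  by (simp add: fun_eq_iff dp_xmul_def derivation_zero split: list.split)

lemma dp_xmul_sum:
  "is_derivation (\<delta> i) \<Longrightarrow> dp_xmul \<delta> i (\<Sum>k\<in>F. g k) = (\<Sum>k\<in>F. dp_xmul \<delta> i (g k))"
  using sum_comp_morphism[of "dp_xmul \<delta> i" g F] by (simp add: dp_xmul_add dp_xmul_zero comp_def)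

lemma dp_xmul_smult: "is_derivation (\<delta> i) \<Longrightarrow>
    dp_xmul \<delta> i (dp_smult b f) = dp_smult b (dp_xmul \<delta> i f) + dp_smult (\<delta> i b) f"
  by (simp add: fun_eq_iff dp_xmul_def dp_smult_def derivation_mult algebra_simps split: list.split)

lemma dp_xmul_monom_one:
  "is_derivation (\<delta> i) \<Longrightarrow> dp_xmul \<delta> i (dp_monom t 1) = dp_monom (i # t) 1"
  by (auto simp: fun_eq_iff dp_xmul_def dp_monom_def derivation_one derivation_zero
      split: list.split)

lemma dp_supp_xmul:
  "is_derivation (\<delta> i) \<Longrightarrow> dp_supp (dp_xmul \<delta> i f) \<subseteq> dp_supp f \<union> Cons i ` dp_supp f"
  using dp_supp_add[of "dp_cons i f" "\<delta> i \<circ> f"] dp_supp_comp_derivation[of "\<delta> i" f]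
  by (auto simp: dp_xmul_eq dp_supp_cons)

fun dp_word_lmult :: "('i \<Rightarrow> 'a::ring_1 \<Rightarrow> 'a) \<Rightarrow> 'i list \<Rightarrow> ('i list \<Rightarrow> 'a) \<Rightarrow> 'i list \<Rightarrow> 'a" where
  "dp_word_lmult \<delta> [] f = f"
| "dp_word_lmult \<delta> (i # t) f = dp_xmul \<delta> i (dp_word_lmult \<delta> t f)"

lemma dp_word_lmult_add: "derivations_on K \<delta> \<Longrightarrow> set t \<subseteq> K \<Longrightarrow>
    dp_word_lmult \<delta> t (f + g) = dp_word_lmult \<delta> t f + dp_word_lmult \<delta> t g"
  by (induction t) (auto simp: derivations_on_def dp_xmul_add)

lemma dp_word_lmult_zero: "derivations_on K \<delta> \<Longrightarrow> set t \<subseteq> K \<Longrightarrow> dp_word_lmult \<delta> t 0 = 0"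
  by (induction t) (auto simp: derivations_on_def dp_xmul_zero)

lemma dp_word_lmult_sum: "derivations_on K \<delta> \<Longrightarrow> set t \<subseteq> K \<Longrightarrow>
    dp_word_lmult \<delta> t (\<Sum>k\<in>F. g k) = (\<Sum>k\<in>F. dp_word_lmult \<delta> t (g k))"
  using sum_comp_morphism[of "dp_word_lmult \<delta> t" g F]
  by (simp add: dp_word_lmult_add dp_word_lmult_zero comp_def)

lemma dp_word_lmult_monom_one: "derivations_on K \<delta> \<Longrightarrow> set t \<subseteq> K \<Longrightarrow>
    dp_word_lmult \<delta> t (dp_monom [] 1) = dp_monom t 1"
  by (induction t) (auto simp: derivations_on_def dp_xmul_monom_one)

lemma dp_supp_word_lmult:
  assumes "derivations_on K \<delta>" "set t \<subseteq> K" "dp_supp f \<subseteq> W"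
    and "\<And>i w. i \<in> set t \<Longrightarrow> w \<in> W \<Longrightarrow> i # w \<in> W"
  shows "dp_supp (dp_word_lmult \<delta> t f) \<subseteq> W"
  using assms(2,4)
proof (induction t)
  case (Cons i t)
  have IH: "dp_supp (dp_word_lmult \<delta> t f) \<subseteq> W"
    using Cons.IH Cons.prems by simp
  have "is_derivation (\<delta> i)" using assms(1) Cons.prems(1) by (simp add: derivations_on_def)
  then have "dp_supp (dp_word_lmult \<delta> (i # t) f)
      \<subseteq> dp_supp (dp_word_lmult \<delta> t f) \<union> Cons i ` dp_supp (dp_word_lmult \<delta> t f)"
    by (simp add: dp_supp_xmul)
  moreover have "Cons i ` dp_supp (dp_word_lmult \<delta> t f) \<subseteq> W"
    using IH by (auto intro: Cons.prems(2))
  ultimately show ?case using IH by blast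
qed (use assms(3) in simp)

lemma finite_dp_supp_word_lmult:
  assumes "derivations_on K \<delta>" "set t \<subseteq> K" "finite (dp_supp f)"
  shows "finite (dp_supp (dp_word_lmult \<delta> t f))"
  using assms
proof (induction t)
  case (Cons i t)
  then have "finite (dp_supp (dp_word_lmult \<delta> t f))" "is_derivation (\<delta> i)"
    by (auto simp: derivations_on_def)
  then show ?case using dp_supp_xmul[of \<delta> i "dp_word_lmult \<delta> t f"] by (auto intro: finite_subset)
qed simp

lemma dp_polys_word_lmult:
  assumes "derivations_on K \<delta>" "set t \<subseteq> K" "q \<in> dp_polys K"
  shows "dp_word_lmult \<delta> t q \<in> dp_polys K"
proof -
  have "dp_supp (dp_word_lmult \<delta> t q) \<subseteq> {w. set w \<subseteq> K}"
    by (rule dp_supp_word_lmult[OF assms(1,2)]) (use assms in \<open>auto simp: dp_polys_def\<close>)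
  then show ?thesis
    using finite_dp_supp_word_lmult[OF assms(1,2)] assms(3) by (auto simp: dp_polys_def)
qed

lemma dp_cons_rword: "dp_cons i (dp_rword q s) = dp_rword (dp_cons i q) s"
proof
  fix u
  show "dp_cons i (dp_rword q s) u = dp_rword (dp_cons i q) s u"
  proof (cases u)
    case (Cons j v)
    show ?thesis
    proof (cases "length s \<le> length v")
      case True
      then have "Suc (length v) - length s = Suc (length v - length s)" by simp
      with True show ?thesis by (simp add: Cons dp_rword_def)
    next
      case False
      then show ?thesis by (auto simp add: Cons dp_rword_def not_le less_Suc_eq_le)
    qed
  qed (simp add: dp_rword_def)
qed

lemma dp_xmul_rword:
  "is_derivation (\<delta> i) \<Longrightarrow> dp_xmul \<delta> i (dp_rword q s) = dp_rword (dp_xmul \<delta> i q) s"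
  by (simp add: fun_eq_iff dp_xmul_eq dp_cons_rword) (simp add: dp_rword_def derivation_zero)

lemma dp_monom_eq_rword: "dp_monom s b = dp_rword (dp_monom [] b) s"
  by (auto simp: fun_eq_iff dp_monom_def dp_rword_def)

lemma dp_word_lmult_monom: "derivations_on K \<delta> \<Longrightarrow> set t \<subseteq> K \<Longrightarrow>
    dp_word_lmult \<delta> t (dp_monom s b) = dp_rword (dp_wmulc \<delta> t b) s"
proof (induction t)
  case Nil
  show ?case by (simp add: dp_monom_eq_rword[of s])
qed (simp add: derivations_on_def dp_xmul_rword)

section \<open>The product as an iterated left action\<close>

text \<open>Expanding \<open>(\<Sum>\<^sub>t p\<^sub>t x\<^sub>t) r\<close> as \<open>\<Sum>\<^sub>t p\<^sub>t (x\<^sub>t r)\<close> turns associativity of \<open>dp_mult\<close>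
  into the fact that left multiplication by \<open>x\<^sub>i\<close> commutes with right multiplication.\<close>

definition dp_times ::
    "('i \<Rightarrow> 'a::ring_1 \<Rightarrow> 'a) \<Rightarrow> ('i list \<Rightarrow> 'a) \<Rightarrow> ('i list \<Rightarrow> 'a) \<Rightarrow> 'i list \<Rightarrow> 'a" where
  "dp_times \<delta> p r = (\<Sum>t\<in>dp_supp p. dp_smult (p t) (dp_word_lmult \<delta> t r))"

lemma dp_mult_eq_dp_times:
  assumes "derivations_on K \<delta>" "p \<in> dp_polys K" "r \<in> dp_polys K"
  shows "dp_mult \<delta> p r = dp_times \<delta> p r"
proof
  fix u
  have "dp_word_lmult \<delta> t r u = (\<Sum>s\<in>dp_supp r. dp_rword (dp_wmulc \<delta> t (r s)) s u)"
    if "t \<in> dp_supp p" for t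
  proof -
    have t: "set t \<subseteq> K" using that assms(2) by (auto simp: dp_polys_def)
    have "dp_word_lmult \<delta> t r = dp_word_lmult \<delta> t (\<Sum>s\<in>dp_supp r. dp_monom s (r s))"
      using dp_monom_decomp[of r] assms(3) by (simp add: dp_polys_def)
    then show ?thesis
      by (simp add: dp_word_lmult_sum[OF assms(1) t] dp_word_lmult_monom[OF assms(1) t]
          sum_fun_apply)
  qed
  then show "dp_mult \<delta> p r u = dp_times \<delta> p r u"
    by (simp add: dp_mult_def dp_times_def sum_fun_apply dp_smult_def sum_distrib_left)
qed

lemma dp_times_superset:
  "finite F \<Longrightarrow> dp_supp p \<subseteq> F \<Longrightarrow> dp_times \<delta> p r = (\<Sum>t\<in>F. dp_smult (p t) (dp_word_lmult \<delta> t r))"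
  unfolding dp_times_def
  by (rule sum.mono_neutral_left) (auto simp: dp_supp_def dp_smult_def fun_eq_iff)

lemma dp_times_add_left:
  assumes "finite (dp_supp p)" "finite (dp_supp q)"
  shows "dp_times \<delta> (p + q) r = dp_times \<delta> p r + dp_times \<delta> q r"
proof -
  let ?F = "dp_supp p \<union> dp_supp q"
  have "finite ?F" using assms by simp
  then show ?thesis
    using dp_supp_add[of p q]
    by (simp add: dp_times_superset[of ?F] dp_smult_add_left sum.distrib)
qed

lemma dp_times_zero_left [simp]: "dp_times \<delta> 0 r = 0"
  by (simp add: dp_times_def)

lemma dp_times_sum_left:
  "(\<And>k. k \<in> F \<Longrightarrow> finite (dp_supp (g k))) \<Longrightarrow>
    dp_times \<delta> (\<Sum>k\<in>F. g k) r = (\<Sum>k\<in>F. dp_times \<delta> (g k) r)"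
proof (induction F rule: infinite_finite_induct)
  case (insert x F)
  have "finite (dp_supp (sum g F))"
    using dp_supp_sum[of g F] insert by (auto intro: finite_subset)
  then have "dp_times \<delta> (g x + sum g F) r = dp_times \<delta> (g x) r + dp_times \<delta> (sum g F) r"
    using insert.prems by (intro dp_times_add_left) auto
  moreover have "dp_times \<delta> (sum g F) r = (\<Sum>k\<in>F. dp_times \<delta> (g k) r)"
    using insert.IH insert.prems by blast
  ultimately show ?case by (simp only: sum.insert[OF insert.hyps])
qed simp_all

lemma dp_times_smult_left:
  assumes "finite (dp_supp p)"
  shows "dp_times \<delta> (dp_smult a p) r = dp_smult a (dp_times \<delta> p r)"
proof -
  have "dp_times \<delta> (dp_smult a p) r
      = (\<Sum>t\<in>dp_supp p. dp_smult (dp_smult a p t) (dp_word_lmult \<delta> t r))"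
    by (rule dp_times_superset[OF assms dp_supp_smult])
  then show ?thesis by (simp add: dp_times_def dp_smult_sum dp_smult_smult) (simp add: dp_smult_def)
qed

lemma dp_times_monom_Nil: "dp_times \<delta> (dp_monom [] a) r = dp_smult a r"
proof -
  have "dp_times \<delta> (dp_monom [] a) r = (\<Sum>t\<in>{[]}. dp_smult (dp_monom [] a t) (dp_word_lmult \<delta> t r))"
    by (rule dp_times_superset[OF _ dp_supp_monom]) simp
  then show ?thesis by (simp add: dp_monom_def)
qed

lemma dp_times_xmul:
  assumes d: "is_derivation (\<delta> i)" and fin: "finite (dp_supp f)"
  shows "dp_times \<delta> (dp_xmul \<delta> i f) r = dp_xmul \<delta> i (dp_times \<delta> f r)"
proof -
  have cons: "dp_times \<delta> (dp_cons i f) r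
      = (\<Sum>s\<in>dp_supp f. dp_smult (f s) (dp_word_lmult \<delta> (i # s) r))"
    by (simp add: dp_times_def dp_supp_cons sum.reindex)
  have comp: "dp_times \<delta> (\<delta> i \<circ> f) r = (\<Sum>s\<in>dp_supp f. dp_smult (\<delta> i (f s)) (dp_word_lmult \<delta> s r))"
    using dp_supp_comp_derivation[OF d, of f] by (simp add: fin dp_times_superset[of "dp_supp f"])
  have "dp_times \<delta> (dp_xmul \<delta> i f) r = dp_times \<delta> (dp_cons i f) r + dp_times \<delta> (\<delta> i \<circ> f) r"
    unfolding dp_xmul_eq
    using fin finite_subset[OF dp_supp_comp_derivation[OF d, of f]]
    by (intro dp_times_add_left) (simp_all add: dp_supp_cons)
  also have "\<dots> = (\<Sum>s\<in>dp_supp f. dp_smult (f s) (dp_xmul \<delta> i (dp_word_lmult \<delta> s r))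
      + dp_smult (\<delta> i (f s)) (dp_word_lmult \<delta> s r))"
    by (simp only: cons comp sum.distrib dp_word_lmult.simps)
  also have "\<dots> = (\<Sum>s\<in>dp_supp f. dp_xmul \<delta> i (dp_smult (f s) (dp_word_lmult \<delta> s r)))"
    by (simp only: dp_xmul_smult[of \<delta> i, OF d])
  also have "\<dots> = dp_xmul \<delta> i (dp_times \<delta> f r)"
    by (simp only: dp_times_def dp_xmul_sum[of \<delta> i, OF d])
  finally show ?thesis .
qed

lemma dp_times_word_lmult_left:
  assumes "derivations_on K \<delta>" "set t \<subseteq> K" "finite (dp_supp q)"
  shows "dp_times \<delta> (dp_word_lmult \<delta> t q) r = dp_word_lmult \<delta> t (dp_times \<delta> q r)"
  using assms(2)
proof (induction t)
  case (Cons i t)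
  then have "is_derivation (\<delta> i)" "finite (dp_supp (dp_word_lmult \<delta> t q))"
    using assms finite_dp_supp_word_lmult[OF assms(1) _ assms(3)]
    by (auto simp: derivations_on_def)
  with Cons show ?case by (simp add: dp_times_xmul)
qed simp

lemma dp_times_assoc:
  assumes K: "derivations_on K \<delta>" and p: "p \<in> dp_polys K" and q: "finite (dp_supp q)"
  shows "dp_times \<delta> (dp_times \<delta> p q) r = dp_times \<delta> p (dp_times \<delta> q r)"
proof -
  have t: "set t \<subseteq> K" if "t \<in> dp_supp p" for t
    using that p by (auto simp: dp_polys_def)
  have fin: "finite (dp_supp (dp_word_lmult \<delta> t q))" if "t \<in> dp_supp p" for t
    using finite_dp_supp_word_lmult[OF K t[OF that] q] .
  have "dp_times \<delta> (dp_times \<delta> p q) r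
      = (\<Sum>t\<in>dp_supp p. dp_times \<delta> (dp_smult (p t) (dp_word_lmult \<delta> t q)) r)"
    unfolding dp_times_def[of \<delta> p q]
    by (rule dp_times_sum_left) (meson fin dp_supp_smult finite_subset)
  also have "\<dots> = (\<Sum>t\<in>dp_supp p. dp_smult (p t) (dp_word_lmult \<delta> t (dp_times \<delta> q r)))"
  proof (rule sum.cong[OF refl])
    fix t assume "t \<in> dp_supp p"
    then show "dp_times \<delta> (dp_smult (p t) (dp_word_lmult \<delta> t q)) r
        = dp_smult (p t) (dp_word_lmult \<delta> t (dp_times \<delta> q r))"
      by (simp only: dp_times_smult_left[OF fin] dp_times_word_lmult_left[OF K t q])
  qed
  also have "\<dots> = dp_times \<delta> p (dp_times \<delta> q r)"
    by (simp only: dp_times_def)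
  finally show ?thesis .
qed

lemma dp_times_add_right:
  assumes "derivations_on K \<delta>" "p \<in> dp_polys K"
  shows "dp_times \<delta> p (q + r) = dp_times \<delta> p q + dp_times \<delta> p r"
proof -
  have "set t \<subseteq> K" if "t \<in> dp_supp p" for t
    using that assms(2) by (auto simp: dp_polys_def)
  then show ?thesis
    by (simp add: dp_times_def dp_word_lmult_add[OF assms(1)] dp_smult_add sum.distrib)
qed

lemma dp_times_one_right:
  assumes "derivations_on K \<delta>" "p \<in> dp_polys K"
  shows "dp_times \<delta> p (dp_monom [] 1) = p"
proof -
  have "dp_smult (p t) (dp_word_lmult \<delta> t (dp_monom [] 1)) = dp_monom t (p t)"
    if "t \<in> dp_supp p" for t
  proof -
    have "set t \<subseteq> K" using that assms(2) by (auto simp: dp_polys_def)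
    then have "dp_word_lmult \<delta> t (dp_monom [] 1) = dp_monom t 1"
      by (rule dp_word_lmult_monom_one[OF assms(1)])
    then show ?thesis by (simp add: dp_smult_def dp_monom_def fun_eq_iff)
  qed
  then have "dp_times \<delta> p (dp_monom [] 1) = (\<Sum>t\<in>dp_supp p. dp_monom t (p t))"
    by (simp add: dp_times_def)
  also have "\<dots> = p" using dp_monom_decomp[of p] assms(2) by (simp add: dp_polys_def)
  finally show ?thesis .
qed

lemma dp_supp_times: "dp_supp (dp_times \<delta> p q) \<subseteq> (\<Union>t\<in>dp_supp p. dp_supp (dp_word_lmult \<delta> t q))"
  unfolding dp_times_def using dp_supp_sum dp_supp_smult by fastforce

lemma dp_polys_times:
  "derivations_on K \<delta> \<Longrightarrow> p \<in> dp_polys K \<Longrightarrow> q \<in> dp_polys K \<Longrightarrow> dp_times \<delta> p q \<in> dp_polys K"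
  unfolding dp_times_def
  by (intro dp_polys_sum dp_polys_smult dp_polys_word_lmult) (auto simp: dp_polys_def)

lemma carrier_diffpoly: "carrier (diffpoly K \<delta>) = dp_polys K"
  by (simp add: diffpoly_def dp_polys_def)

lemma diffpoly_add [simp]: "p \<oplus>\<^bsub>diffpoly K \<delta>\<^esub> q = p + q"
  by (simp add: diffpoly_def plus_fun_def)

lemma diffpoly_zero [simp]: "\<zero>\<^bsub>diffpoly K \<delta>\<^esub> = 0"
  by (simp add: diffpoly_def zero_fun_def)

lemma diffpoly_one [simp]: "\<one>\<^bsub>diffpoly K \<delta>\<^esub> = dp_monom [] 1"
  by (simp add: diffpoly_def)

lemma diffpoly_mult [simp]: "p \<otimes>\<^bsub>diffpoly K \<delta>\<^esub> q = dp_mult \<delta> p q"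
  by (simp add: diffpoly_def)

lemma ring_diffpoly:
  fixes \<delta> :: "'i \<Rightarrow> 'a::ring_1 \<Rightarrow> 'a"
  assumes K: "derivations_on K \<delta>"
  shows "ring (diffpoly K \<delta>)"
proof (rule ringI)
  show "abelian_group (diffpoly K \<delta>)"
  proof (rule abelian_groupI)
    fix x assume "x \<in> carrier (diffpoly K \<delta>)"
    then show "\<exists>y\<in>carrier (diffpoly K \<delta>). y \<oplus>\<^bsub>diffpoly K \<delta>\<^esub> x = \<zero>\<^bsub>diffpoly K \<delta>\<^esub>"
      by (intro bexI[of _ "- x"]) (simp_all add: carrier_diffpoly dp_polys_uminus)
  qed (simp_all add: carrier_diffpoly dp_polys_add add.assoc add.commute)
next
  show "monoid (diffpoly K \<delta>)"
  proof (rule monoidI)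
    fix x y z
    assume "x \<in> carrier (diffpoly K \<delta>)" "y \<in> carrier (diffpoly K \<delta>)" "z \<in> carrier (diffpoly K \<delta>)"
    then have xyz: "x \<in> dp_polys K" "y \<in> dp_polys K" "z \<in> dp_polys K"
      by (simp_all add: carrier_diffpoly)
    then have "dp_times \<delta> (dp_times \<delta> x y) z = dp_times \<delta> x (dp_times \<delta> y z)"
      by (intro dp_times_assoc[OF K]) (auto simp: dp_polys_def)
    with xyz show "x \<otimes>\<^bsub>diffpoly K \<delta>\<^esub> y \<otimes>\<^bsub>diffpoly K \<delta>\<^esub> z = x \<otimes>\<^bsub>diffpoly K \<delta>\<^esub> (y \<otimes>\<^bsub>diffpoly K \<delta>\<^esub> z)"
      by (simp add: dp_mult_eq_dp_times[OF K] dp_polys_times[OF K])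
  qed (auto simp: carrier_diffpoly dp_mult_eq_dp_times[OF K] dp_polys_times[OF K] dp_polys_monom
      dp_times_monom_Nil dp_times_one_right[OF K] dp_smult_def)
next
  fix x y z
  assume "x \<in> carrier (diffpoly K \<delta>)" "y \<in> carrier (diffpoly K \<delta>)" "z \<in> carrier (diffpoly K \<delta>)"
  then have xyz: "x \<in> dp_polys K" "y \<in> dp_polys K" "z \<in> dp_polys K"
    by (simp_all add: carrier_diffpoly)
  then show "(x \<oplus>\<^bsub>diffpoly K \<delta>\<^esub> y) \<otimes>\<^bsub>diffpoly K \<delta>\<^esub> z
      = x \<otimes>\<^bsub>diffpoly K \<delta>\<^esub> z \<oplus>\<^bsub>diffpoly K \<delta>\<^esub> y \<otimes>\<^bsub>diffpoly K \<delta>\<^esub> z"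
    by (simp add: dp_mult_eq_dp_times[OF K] dp_polys_add) (simp add: dp_times_add_left dp_polys_def)
  show "z \<otimes>\<^bsub>diffpoly K \<delta>\<^esub> (x \<oplus>\<^bsub>diffpoly K \<delta>\<^esub> y)
      = z \<otimes>\<^bsub>diffpoly K \<delta>\<^esub> x \<oplus>\<^bsub>diffpoly K \<delta>\<^esub> z \<otimes>\<^bsub>diffpoly K \<delta>\<^esub> y"
    using xyz by (simp add: dp_mult_eq_dp_times[OF K] dp_polys_add dp_times_add_right[OF K])
qed

section \<open>Coefficients on the right\<close>

text \<open>Every element of \<open>R[X;D]\<close> is uniquely of the form \<open>\<Sum>\<^sub>w x\<^sub>w b\<^sub>w\<close>, with coefficients
  on the right; \<open>dp_rcoeffs \<delta> p\<close> is the function \<open>w \<mapsto> b\<^sub>w\<close>. The recursion for a single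
  monomial comes from \<open>a x\<^sub>i x\<^sub>t = x\<^sub>i (a x\<^sub>t) - \<delta>\<^sub>i(a) x\<^sub>t\<close>.\<close>

fun dp_rcoeffs_monom :: "('i \<Rightarrow> 'a::ring_1 \<Rightarrow> 'a) \<Rightarrow> 'i list \<Rightarrow> 'a \<Rightarrow> 'i list \<Rightarrow> 'a" where
  "dp_rcoeffs_monom \<delta> [] a = dp_monom [] a"
| "dp_rcoeffs_monom \<delta> (i # t) a = dp_cons i (dp_rcoeffs_monom \<delta> t a) - dp_rcoeffs_monom \<delta> t (\<delta> i a)"

definition dp_rcoeffs :: "('i \<Rightarrow> 'a::ring_1 \<Rightarrow> 'a) \<Rightarrow> ('i list \<Rightarrow> 'a) \<Rightarrow> 'i list \<Rightarrow> 'a" where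
  "dp_rcoeffs \<delta> p = (\<Sum>t\<in>dp_supp p. dp_rcoeffs_monom \<delta> t (p t))"

definition dp_of_rcoeffs :: "('i \<Rightarrow> 'a::ring_1 \<Rightarrow> 'a) \<Rightarrow> ('i list \<Rightarrow> 'a) \<Rightarrow> 'i list \<Rightarrow> 'a" where
  "dp_of_rcoeffs \<delta> f = (\<Sum>w\<in>dp_supp f. dp_word_lmult \<delta> w (dp_monom [] (f w)))"

fun dp_prefix :: "'i list \<Rightarrow> ('i list \<Rightarrow> 'a::zero) \<Rightarrow> 'i list \<Rightarrow> 'a" where
  "dp_prefix [] f = f"
| "dp_prefix (i # w) f = dp_cons i (dp_prefix w f)"

lemma dp_rcoeffs_monom_add: "derivations_on K \<delta> \<Longrightarrow> set t \<subseteq> K \<Longrightarrow>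
    dp_rcoeffs_monom \<delta> t (a + b) = dp_rcoeffs_monom \<delta> t a + dp_rcoeffs_monom \<delta> t b"
proof (induction t arbitrary: a b)
  case Nil
  show ?case by (simp add: fun_eq_iff dp_monom_def)
next
  case (Cons i t)
  then have "is_derivation (\<delta> i)" by (simp add: derivations_on_def)
  with Cons show ?case by (auto simp: fun_eq_iff dp_cons_def derivation_add split: list.split)
qed

lemma dp_rcoeffs_monom_zero: "derivations_on K \<delta> \<Longrightarrow> set t \<subseteq> K \<Longrightarrow> dp_rcoeffs_monom \<delta> t 0 = 0"
  using dp_rcoeffs_monom_add[of K \<delta> t 0 0] by simp

lemma dp_supp_rcoeffs_monom_Cons: "dp_supp (dp_rcoeffs_monom \<delta> (i # t) a)
    \<subseteq> Cons i ` dp_supp (dp_rcoeffs_monom \<delta> t a) \<union> dp_supp (dp_rcoeffs_monom \<delta> t (\<delta> i a))"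
  using dp_supp_diff[of "dp_cons i (dp_rcoeffs_monom \<delta> t a)" "dp_rcoeffs_monom \<delta> t (\<delta> i a)"]
  by (simp only: dp_rcoeffs_monom.simps dp_supp_cons)

lemma dp_supp_rcoeffs_monom: "dp_supp (dp_rcoeffs_monom \<delta> t a) \<subseteq> {w. set w \<subseteq> set t}"
proof (induction t arbitrary: a)
  case Nil
  show ?case using dp_supp_monom[of "[]" a] by simp
next
  case (Cons i t)
  show ?case
  proof
    fix w assume "w \<in> dp_supp (dp_rcoeffs_monom \<delta> (i # t) a)"
    then consider v where "w = i # v" "v \<in> dp_supp (dp_rcoeffs_monom \<delta> t a)"
      | "w \<in> dp_supp (dp_rcoeffs_monom \<delta> t (\<delta> i a))"
      using dp_supp_rcoeffs_monom_Cons[of \<delta> i t a] by blast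
    then show "w \<in> {w. set w \<subseteq> set (i # t)}"
    proof cases
      case 1
      then have "set v \<subseteq> set t" using Cons.IH[of a] by blast
      with 1 show ?thesis by auto
    next
      case 2
      then have "set w \<subseteq> set t" using Cons.IH[of "\<delta> i a"] by blast
      then show ?thesis by auto
    qed
  qed
qed

lemma finite_dp_supp_rcoeffs_monom: "finite (dp_supp (dp_rcoeffs_monom \<delta> t a))"
proof (induction t arbitrary: a)
  case Nil
  show ?case by (simp add: finite_subset[OF dp_supp_monom])
next
  case (Cons i t)
  show ?case by (rule finite_subset[OF dp_supp_rcoeffs_monom_Cons]) (simp add: Cons.IH)
qed

text \<open>Triangularity: the right expansion of \<open>a x\<^sub>t\<close> is \<open>x\<^sub>t a\<close> plus shorter words.\<close>

lemma dp_rcoeffs_monom_long: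
  "length t \<le> length u \<Longrightarrow> dp_rcoeffs_monom \<delta> t a u = (if u = t then a else 0)"
proof (induction t arbitrary: a u)
  case Nil
  then show ?case by (simp add: dp_monom_def)
next
  case (Cons i t)
  then obtain j v where u: "u = j # v" by (cases u) auto
  with Cons show ?case by auto
qed

lemma dp_polys_rcoeffs: "p \<in> dp_polys K \<Longrightarrow> dp_rcoeffs \<delta> p \<in> dp_polys K"
  unfolding dp_rcoeffs_def
proof (rule dp_polys_sum)
  fix t assume "p \<in> dp_polys K" "t \<in> dp_supp p"
  then have "set t \<subseteq> K" by (simp add: dp_polys_def)
  then show "dp_rcoeffs_monom \<delta> t (p t) \<in> dp_polys K"
    using dp_supp_rcoeffs_monom[of \<delta> t "p t"] finite_dp_supp_rcoeffs_monom[of \<delta> t "p t"]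
    by (auto simp: dp_polys_def)
qed

lemma dp_rcoeffs_superset:
  assumes "derivations_on K \<delta>" "finite F" "dp_supp p \<subseteq> F" "\<forall>t\<in>F. set t \<subseteq> K"
  shows "dp_rcoeffs \<delta> p = (\<Sum>t\<in>F. dp_rcoeffs_monom \<delta> t (p t))"
  unfolding dp_rcoeffs_def
  by (rule sum.mono_neutral_left[OF assms(2,3)])
    (use assms in \<open>auto simp: dp_supp_def dp_rcoeffs_monom_zero\<close>)

lemma dp_rcoeffs_zero [simp]: "dp_rcoeffs \<delta> 0 = 0"
  by (simp add: dp_rcoeffs_def)

lemma dp_rcoeffs_add:
  assumes K: "derivations_on K \<delta>" and "p \<in> dp_polys K" "q \<in> dp_polys K"
  shows "dp_rcoeffs \<delta> (p + q) = dp_rcoeffs \<delta> p + dp_rcoeffs \<delta> q"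
proof -
  let ?F = "dp_supp p \<union> dp_supp q"
  have F: "finite ?F" "\<forall>t\<in>?F. set t \<subseteq> K" using assms by (auto simp: dp_polys_def)
  then show ?thesis
    using dp_supp_add[of p q]
    by (simp add: dp_rcoeffs_superset[OF K F(1) _ F(2)] dp_rcoeffs_monom_add[OF K] sum.distrib)
qed

lemma dp_rcoeffs_diff:
  assumes "derivations_on K \<delta>" "p \<in> dp_polys K" "q \<in> dp_polys K"
  shows "dp_rcoeffs \<delta> (p - q) = dp_rcoeffs \<delta> p - dp_rcoeffs \<delta> q"
  using dp_rcoeffs_add[OF assms(1) dp_polys_diff[OF assms(2,3)] assms(3)]
  by (simp add: algebra_simps)

lemma dp_rcoeffs_sum:
  assumes "derivations_on K \<delta>" "\<And>k. k \<in> F \<Longrightarrow> g k \<in> dp_polys K"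
  shows "dp_rcoeffs \<delta> (\<Sum>k\<in>F. g k) = (\<Sum>k\<in>F. dp_rcoeffs \<delta> (g k))"
  using assms(2)
proof (induction F rule: infinite_finite_induct)
  case (insert x F)
  then have "dp_rcoeffs \<delta> (g x + sum g F) = dp_rcoeffs \<delta> (g x) + dp_rcoeffs \<delta> (sum g F)"
    by (intro dp_rcoeffs_add[OF assms(1)] dp_polys_sum) auto
  moreover have "dp_rcoeffs \<delta> (sum g F) = (\<Sum>k\<in>F. dp_rcoeffs \<delta> (g k))"
    using insert.IH insert.prems by blast
  ultimately show ?case by (simp only: sum.insert[OF insert.hyps])
qed simp_all

lemma dp_rcoeffs_monom:
  assumes "derivations_on K \<delta>" "set t \<subseteq> K"
  shows "dp_rcoeffs \<delta> (dp_monom t a) = dp_rcoeffs_monom \<delta> t a"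
proof -
  have "dp_rcoeffs \<delta> (dp_monom t a) = (\<Sum>s\<in>{t}. dp_rcoeffs_monom \<delta> s (dp_monom t a s))"
    using assms dp_supp_monom by (intro dp_rcoeffs_superset) auto
  then show ?thesis by (simp add: dp_monom_def)
qed

lemma dp_rcoeffs_xmul:
  assumes K: "derivations_on K \<delta>" and i: "i \<in> K" and p: "p \<in> dp_polys K"
  shows "dp_rcoeffs \<delta> (dp_xmul \<delta> i p) = dp_cons i (dp_rcoeffs \<delta> p)"
proof -
  have d: "is_derivation (\<delta> i)" using K i by (simp add: derivations_on_def)
  have fin: "finite (dp_supp p)" and W: "\<forall>t\<in>dp_supp p. set t \<subseteq> K"
    using p by (auto simp: dp_polys_def)
  have "dp_rcoeffs \<delta> (dp_cons i p) = (\<Sum>s\<in>dp_supp p. dp_rcoeffs_monom \<delta> (i # s) (p s))"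
    by (simp add: dp_rcoeffs_def dp_supp_cons sum.reindex)
  moreover have "dp_rcoeffs \<delta> (\<delta> i \<circ> p) = (\<Sum>s\<in>dp_supp p. dp_rcoeffs_monom \<delta> s (\<delta> i (p s)))"
    using dp_supp_comp_derivation[OF d, of p] by (simp add: dp_rcoeffs_superset[OF K fin _ W])
  moreover have "dp_rcoeffs \<delta> (dp_xmul \<delta> i p) = dp_rcoeffs \<delta> (dp_cons i p) + dp_rcoeffs \<delta> (\<delta> i \<circ> p)"
    unfolding dp_xmul_eq
    by (rule dp_rcoeffs_add[OF K dp_polys_cons[OF i p] dp_polys_comp_derivation[OF d p]])
  ultimately show ?thesis
    by (simp add: dp_rcoeffs_def dp_cons_sum sum.distrib[symmetric])
qed

lemma dp_rcoeffs_word_lmult: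
  assumes "derivations_on K \<delta>" "set w \<subseteq> K" "p \<in> dp_polys K"
  shows "dp_rcoeffs \<delta> (dp_word_lmult \<delta> w p) = dp_prefix w (dp_rcoeffs \<delta> p)"
  using assms(2)
proof (induction w)
  case (Cons i w)
  then show ?case
    by (simp add: dp_rcoeffs_xmul[OF assms(1)] dp_polys_word_lmult[OF assms(1) _ assms(3)])
qed simp

lemma dp_supp_prefix: "dp_supp (dp_prefix w f) \<subseteq> (@) w ` dp_supp f"
proof (induction w)
  case (Cons i w)
  show ?case using image_mono[OF Cons.IH, of "Cons i"] by (simp add: dp_supp_cons image_image)
qed simp

lemma dp_prefix_monom_Nil: "dp_prefix w (dp_monom [] a) = dp_monom w a"
  by (induction w) (auto simp: dp_monom_def fun_eq_iff dp_cons_def split: list.split)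

lemma dp_rcoeffs_eq_0D:
  assumes "finite (dp_supp p)" "dp_rcoeffs \<delta> p = 0"
  shows "p = 0"
proof (rule ccontr)
  assume "p \<noteq> 0"
  then have "dp_supp p \<noteq> {}" by (simp add: dp_supp_eq_empty_iff)
  then have "Max (length ` dp_supp p) \<in> length ` dp_supp p"
    using assms(1) by (intro Max_in) auto
  then obtain t where t: "t \<in> dp_supp p" "length t = Max (length ` dp_supp p)"
    by auto
  have longest: "length s \<le> length t" if "s \<in> dp_supp p" for s
    using that t(2) assms(1) by simp
  have "dp_rcoeffs \<delta> p t = (\<Sum>s\<in>dp_supp p. if t = s then p s else 0)"
    by (simp add: dp_rcoeffs_def sum_fun_apply dp_rcoeffs_monom_long longest)
  also have "\<dots> = p t" using assms(1) t(1) by simp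
  finally show False using assms(2) t(1) by (simp add: dp_supp_def)
qed

lemma dp_polys_of_rcoeffs:
  "derivations_on K \<delta> \<Longrightarrow> f \<in> dp_polys K \<Longrightarrow> dp_of_rcoeffs \<delta> f \<in> dp_polys K"
  unfolding dp_of_rcoeffs_def
  by (intro dp_polys_sum dp_polys_word_lmult dp_polys_monom) (auto simp: dp_polys_def)

lemma dp_rcoeffs_of_rcoeffs:
  assumes K: "derivations_on K \<delta>" and f: "f \<in> dp_polys K"
  shows "dp_rcoeffs \<delta> (dp_of_rcoeffs \<delta> f) = f"
proof -
  have W: "set w \<subseteq> K" if "w \<in> dp_supp f" for w
    using that f by (auto simp: dp_polys_def)
  then have "dp_rcoeffs \<delta> (dp_of_rcoeffs \<delta> f)
      = (\<Sum>w\<in>dp_supp f. dp_rcoeffs \<delta> (dp_word_lmult \<delta> w (dp_monom [] (f w))))"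
    unfolding dp_of_rcoeffs_def
    by (intro dp_rcoeffs_sum[OF K] dp_polys_word_lmult[OF K] dp_polys_monom) auto
  also have "\<dots> = (\<Sum>w\<in>dp_supp f. dp_monom w (f w))"
    using W by (intro sum.cong refl)
      (simp add: dp_rcoeffs_word_lmult[OF K] dp_polys_monom dp_rcoeffs_monom[OF K]
        dp_prefix_monom_Nil)
  also have "\<dots> = f" using dp_monom_decomp[of f] f by (simp add: dp_polys_def)
  finally show ?thesis .
qed

lemma dp_of_rcoeffs_rcoeffs:
  assumes K: "derivations_on K \<delta>" and p: "p \<in> dp_polys K"
  shows "dp_of_rcoeffs \<delta> (dp_rcoeffs \<delta> p) = p"
proof -
  have r: "dp_rcoeffs \<delta> p \<in> dp_polys K" by (rule dp_polys_rcoeffs[OF p])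
  have "dp_rcoeffs \<delta> (dp_of_rcoeffs \<delta> (dp_rcoeffs \<delta> p) - p) = 0"
    by (simp add: dp_rcoeffs_diff[OF K dp_polys_of_rcoeffs[OF K r] p] dp_rcoeffs_of_rcoeffs[OF K r])
  then show ?thesis
    using dp_rcoeffs_eq_0D dp_polys_diff[OF dp_polys_of_rcoeffs[OF K r] p]
    by (force simp: dp_polys_def)
qed

section \<open>Corners of differential polynomial rings\<close>

lemma diffpoly_a_inv:
  assumes "derivations_on K \<delta>" "p \<in> dp_polys K"
  shows "\<ominus>\<^bsub>diffpoly K \<delta>\<^esub> p = - p"
proof -
  interpret ring "diffpoly K \<delta>" by (rule ring_diffpoly[OF assms(1)])
  show ?thesis
    using assms(2) by (intro minus_equality) (simp_all add: carrier_diffpoly dp_polys_uminus)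
qed

lemma additive_subgroup_diffpolyI:
  assumes K: "derivations_on K \<delta>" and "H \<subseteq> dp_polys K" "0 \<in> H"
    and "\<And>x y. x \<in> H \<Longrightarrow> y \<in> H \<Longrightarrow> x + y \<in> H" and "\<And>x. x \<in> H \<Longrightarrow> - x \<in> H"
  shows "additive_subgroup H (diffpoly K \<delta>)"
proof -
  interpret ring "diffpoly K \<delta>" by (rule ring_diffpoly[OF K])
  show ?thesis
    using assms by (auto simp: additive_subgroup_iff carrier_diffpoly diffpoly_a_inv[OF K])
qed

lemma subring_nu_diffpoly:
  "derivations_on I \<delta> \<Longrightarrow> J \<subseteq> I \<Longrightarrow> subring_nu (diffpoly I \<delta>) (diffpoly J \<delta>)"
  using ring_diffpoly[OF derivations_on_mono]
  by (auto simp: subring_nu_def carrier_diffpoly intro: dp_polys_mono)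

lemma direct_complement_diffpolyI:
  fixes \<delta> :: "'i \<Rightarrow> 'a::ring_1 \<Rightarrow> 'a"
  assumes "J \<subseteq> I" and C: "additive_subgroup C (diffpoly I \<delta>)"
    and split: "\<And>p. p \<in> dp_polys I \<Longrightarrow> \<exists>b\<in>dp_polys J. p - b \<in> C"
    and disjoint: "\<And>c. c \<in> dp_polys J \<Longrightarrow> c \<in> C \<Longrightarrow> c = 0"
  shows "direct_complement (diffpoly I \<delta>) (diffpoly J \<delta>) C"
proof -
  have CI: "C \<subseteq> dp_polys I"
    using additive_subgroup.a_subset[OF C] by (simp add: carrier_diffpoly)
  have "dp_polys I \<subseteq> {b + c |b c. b \<in> dp_polys J \<and> c \<in> C}"
  proof
    fix p :: "'i list \<Rightarrow> 'a" assume "p \<in> dp_polys I"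
    then obtain b where "b \<in> dp_polys J" "p - b \<in> C" using split by blast
    then show "p \<in> {b + c |b c. b \<in> dp_polys J \<and> c \<in> C}"
      by (intro CollectI exI[of _ b] exI[of _ "p - b"]) simp
  qed
  moreover have "{b + c |b c. b \<in> dp_polys J \<and> c \<in> C} \<subseteq> dp_polys I"
    using CI assms(1) by (auto intro: dp_polys_add dp_polys_mono)
  moreover have "0 \<in> C" using additive_subgroup.zero_closed[OF C] by simp
  ultimately show ?thesis
    using C disjoint by (auto simp: direct_complement_def carrier_diffpoly)
qed

text \<open>The complement of \<open>S\<^sub>J\<close> in \<open>S\<close> for the left corner; it is even a left ideal of \<open>S\<close>.\<close>

definition dp_lcompl :: "'i set \<Rightarrow> 'i set \<Rightarrow> ('i list \<Rightarrow> 'a::zero) set" where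
  "dp_lcompl I J = {c \<in> dp_polys I. \<forall>w\<in>dp_supp c. \<not> set w \<subseteq> J}"

lemma additive_subgroup_dp_lcompl:
  fixes \<delta> :: "'i \<Rightarrow> 'a::ring_1 \<Rightarrow> 'a"
  assumes "derivations_on I \<delta>"
  shows "additive_subgroup (dp_lcompl I J) (diffpoly I \<delta>)"
proof (rule additive_subgroup_diffpolyI[OF assms])
  fix x y :: "'i list \<Rightarrow> 'a" assume "x \<in> dp_lcompl I J" "y \<in> dp_lcompl I J"
  then show "x + y \<in> dp_lcompl I J"
    using dp_supp_add[of x y] by (simp add: dp_lcompl_def dp_polys_add) blast
qed (auto simp: dp_lcompl_def dp_polys_uminus)

lemma dp_times_dp_lcompl:
  assumes I: "derivations_on I \<delta>" and b: "b \<in> dp_polys I" and c: "c \<in> dp_lcompl I J"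
  shows "dp_times \<delta> b c \<in> dp_lcompl I J"
proof -
  have "dp_supp (dp_word_lmult \<delta> t c) \<subseteq> {w. \<not> set w \<subseteq> J}" if "t \<in> dp_supp b" for t
    using that b c by (intro dp_supp_word_lmult[OF I]) (auto simp: dp_polys_def dp_lcompl_def)
  then have "dp_supp (dp_times \<delta> b c) \<subseteq> {w. \<not> set w \<subseteq> J}"
    using dp_supp_times[of \<delta> b c] by blast
  moreover have "dp_times \<delta> b c \<in> dp_polys I"
    using c by (intro dp_polys_times[OF I b]) (simp add: dp_lcompl_def)
  ultimately show ?thesis by (auto simp: dp_lcompl_def)
qed

lemma left_corner_diffpoly:
  fixes \<delta> :: "'i \<Rightarrow> 'a::ring_1 \<Rightarrow> 'a"
  assumes I: "derivations_on I \<delta>" and J: "J \<subseteq> I"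
  shows "left_corner (diffpoly I \<delta>) (diffpoly J \<delta>)"
proof -
  have "direct_complement (diffpoly I \<delta>) (diffpoly J \<delta>) (dp_lcompl I J)"
  proof (rule direct_complement_diffpolyI[OF J additive_subgroup_dp_lcompl[OF I]])
    fix p :: "'i list \<Rightarrow> 'a" assume p: "p \<in> dp_polys I"
    let ?b = "\<lambda>u. if set u \<subseteq> J then p u else 0"
    have b: "?b \<in> dp_polys J" by (rule dp_polys_restrict[OF p])
    have "p - ?b \<in> dp_polys I" by (rule dp_polys_diff[OF p dp_polys_mono[OF b J]])
    moreover have "p - ?b = (\<lambda>u. if set u \<subseteq> J then 0 else p u)" by (simp add: fun_eq_iff)
    ultimately have "p - ?b \<in> dp_lcompl I J"
      by (simp add: dp_lcompl_def dp_supp_def)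
    with b show "\<exists>b\<in>dp_polys J. p - b \<in> dp_lcompl I J" by blast
  next
    fix c :: "'i list \<Rightarrow> 'a" assume "c \<in> dp_polys J" "c \<in> dp_lcompl I J"
    then have "dp_supp c = {}" by (auto simp: dp_polys_def dp_lcompl_def)
    then show "c = 0" by (simp add: dp_supp_eq_empty_iff)
  qed
  moreover have "b \<otimes>\<^bsub>diffpoly I \<delta>\<^esub> c \<in> dp_lcompl I J"
    if "b \<in> carrier (diffpoly J \<delta>)" "c \<in> dp_lcompl I J" for b c
  proof -
    have "b \<in> dp_polys I" "c \<in> dp_polys I"
      using that J by (auto simp: carrier_diffpoly dp_lcompl_def intro: dp_polys_mono)
    then show ?thesis
      using that dp_times_dp_lcompl[OF I] by (simp add: dp_mult_eq_dp_times[OF I])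
  qed
  ultimately show ?thesis
    unfolding left_corner_def using subring_nu_diffpoly[OF I J] by blast
qed

text \<open>The complement of \<open>S\<^sub>J\<close> in \<open>S\<close> for the right corner: the polynomials \<open>\<Sum>\<^sub>w x\<^sub>w b\<^sub>w\<close>
  all of whose words \<open>w\<close> leave \<open>J\<close>. It is even a right ideal of \<open>S\<close>.\<close>

definition dp_rcompl :: "('i \<Rightarrow> 'a::ring_1 \<Rightarrow> 'a) \<Rightarrow> 'i set \<Rightarrow> 'i set \<Rightarrow> ('i list \<Rightarrow> 'a) set" where
  "dp_rcompl \<delta> I J = {c \<in> dp_polys I. \<forall>w\<in>dp_supp (dp_rcoeffs \<delta> c). \<not> set w \<subseteq> J}"

lemma additive_subgroup_dp_rcompl:
  assumes I: "derivations_on I \<delta>"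
  shows "additive_subgroup (dp_rcompl \<delta> I J) (diffpoly I \<delta>)"
proof (rule additive_subgroup_diffpolyI[OF I])
  fix x y assume "x \<in> dp_rcompl \<delta> I J" "y \<in> dp_rcompl \<delta> I J"
  then show "x + y \<in> dp_rcompl \<delta> I J"
    using dp_supp_add[of "dp_rcoeffs \<delta> x" "dp_rcoeffs \<delta> y"]
    by (simp add: dp_rcompl_def dp_polys_add dp_rcoeffs_add[OF I]) blast
next
  fix x assume x: "x \<in> dp_rcompl \<delta> I J"
  then have "dp_rcoeffs \<delta> (- x) = - dp_rcoeffs \<delta> x"
    using dp_rcoeffs_diff[OF I dp_polys_zero, of x] by (simp add: dp_rcompl_def)
  with x show "- x \<in> dp_rcompl \<delta> I J"
    by (simp add: dp_rcompl_def dp_polys_uminus)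
qed (auto simp: dp_rcompl_def)

lemma dp_times_dp_rcompl:
  assumes I: "derivations_on I \<delta>" and c: "c \<in> dp_rcompl \<delta> I J" and b: "b \<in> dp_polys I"
  shows "dp_times \<delta> c b \<in> dp_rcompl \<delta> I J"
proof -
  define f where "f = dp_rcoeffs \<delta> c"
  have cI: "c \<in> dp_polys I" using c by (simp add: dp_rcompl_def)
  have f: "f \<in> dp_polys I" unfolding f_def by (rule dp_polys_rcoeffs[OF cI])
  have w: "set w \<subseteq> I" "\<not> set w \<subseteq> J" if "w \<in> dp_supp f" for w
    using that f c by (auto simp: dp_polys_def dp_rcompl_def f_def)
  have "dp_times \<delta> c b = dp_times \<delta> (dp_of_rcoeffs \<delta> f) b"
    by (simp add: f_def dp_of_rcoeffs_rcoeffs[OF I cI])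
  also have "\<dots> = (\<Sum>w\<in>dp_supp f. dp_times \<delta> (dp_word_lmult \<delta> w (dp_monom [] (f w))) b)"
    unfolding dp_of_rcoeffs_def
    by (rule dp_times_sum_left) (simp add: finite_dp_supp_word_lmult[OF I w(1)])
  also have "\<dots> = (\<Sum>w\<in>dp_supp f. dp_word_lmult \<delta> w (dp_smult (f w) b))"
    by (rule sum.cong[OF refl])
      (simp add: dp_times_word_lmult_left[OF I w(1)] dp_times_monom_Nil)
  finally have cb: "dp_times \<delta> c b = (\<Sum>w\<in>dp_supp f. dp_word_lmult \<delta> w (dp_smult (f w) b))" .
  have "dp_rcoeffs \<delta> (dp_times \<delta> c b)
      = (\<Sum>w\<in>dp_supp f. dp_prefix w (dp_rcoeffs \<delta> (dp_smult (f w) b)))"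
    unfolding cb using b
    by (simp add: dp_rcoeffs_sum[OF I] dp_polys_word_lmult[OF I w(1)] dp_polys_smult
        dp_rcoeffs_word_lmult[OF I w(1)])
  then have "dp_supp (dp_rcoeffs \<delta> (dp_times \<delta> c b))
      \<subseteq> (\<Union>w\<in>dp_supp f. dp_supp (dp_prefix w (dp_rcoeffs \<delta> (dp_smult (f w) b))))"
    by (simp only: dp_supp_sum)
  also have "\<dots> \<subseteq> (\<Union>w\<in>dp_supp f. (@) w ` dp_supp (dp_rcoeffs \<delta> (dp_smult (f w) b)))"
    by (intro UN_mono subset_refl dp_supp_prefix)
  finally have "\<forall>u\<in>dp_supp (dp_rcoeffs \<delta> (dp_times \<delta> c b)). \<not> set u \<subseteq> J"
    using w(2) by fastforce
  moreover have "dp_times \<delta> c b \<in> dp_polys I" by (rule dp_polys_times[OF I cI b])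
  ultimately show ?thesis by (simp add: dp_rcompl_def)
qed

lemma right_corner_diffpoly:
  fixes \<delta> :: "'i \<Rightarrow> 'a::ring_1 \<Rightarrow> 'a"
  assumes I: "derivations_on I \<delta>" and J: "J \<subseteq> I"
  shows "right_corner (diffpoly I \<delta>) (diffpoly J \<delta>)"
proof -
  have "direct_complement (diffpoly I \<delta>) (diffpoly J \<delta>) (dp_rcompl \<delta> I J)"
  proof (rule direct_complement_diffpolyI[OF J additive_subgroup_dp_rcompl[OF I]])
    fix p :: "'i list \<Rightarrow> 'a" assume p: "p \<in> dp_polys I"
    define f where "f = dp_rcoeffs \<delta> p"
    have f: "f \<in> dp_polys I" unfolding f_def by (rule dp_polys_rcoeffs[OF p])
    define g where "g = (\<lambda>u. if set u \<subseteq> J then f u else 0)"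
    have gJ: "g \<in> dp_polys J" unfolding g_def by (rule dp_polys_restrict[OF f])
    define b where "b = dp_of_rcoeffs \<delta> g"
    have bJ: "b \<in> dp_polys J"
      unfolding b_def by (rule dp_polys_of_rcoeffs[OF derivations_on_mono[OF I J] gJ])
    have bI: "b \<in> dp_polys I" by (rule dp_polys_mono[OF bJ J])
    have "dp_rcoeffs \<delta> (p - b) = dp_rcoeffs \<delta> p - dp_rcoeffs \<delta> b"
      by (rule dp_rcoeffs_diff[OF I p bI])
    also have "dp_rcoeffs \<delta> b = g"
      unfolding b_def by (rule dp_rcoeffs_of_rcoeffs[OF I dp_polys_mono[OF gJ J]])
    finally have "dp_rcoeffs \<delta> (p - b) = f - g"
      by (simp only: f_def)
    then have "\<forall>u\<in>dp_supp (dp_rcoeffs \<delta> (p - b)). \<not> set u \<subseteq> J"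
      by (simp add: dp_supp_def g_def)
    then have "p - b \<in> dp_rcompl \<delta> I J"
      using dp_polys_diff[OF p bI] by (simp add: dp_rcompl_def)
    with bJ show "\<exists>b\<in>dp_polys J. p - b \<in> dp_rcompl \<delta> I J" by blast
  next
    fix c :: "'i list \<Rightarrow> 'a" assume c: "c \<in> dp_polys J" "c \<in> dp_rcompl \<delta> I J"
    have "dp_rcoeffs \<delta> c \<in> dp_polys J" by (rule dp_polys_rcoeffs[OF c(1)])
    with c(2) have "dp_supp (dp_rcoeffs \<delta> c) = {}"
      by (auto simp: dp_polys_def dp_rcompl_def)
    then have "dp_rcoeffs \<delta> c = 0" by (simp add: dp_supp_eq_empty_iff)
    then show "c = 0"
      by (rule dp_rcoeffs_eq_0D[rotated]) (use c(1) in \<open>simp add: dp_polys_def\<close>)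
  qed
  moreover have "c \<otimes>\<^bsub>diffpoly I \<delta>\<^esub> b \<in> dp_rcompl \<delta> I J"
    if "b \<in> carrier (diffpoly J \<delta>)" "c \<in> dp_rcompl \<delta> I J" for b c
  proof -
    have "b \<in> dp_polys I" "c \<in> dp_polys I"
      using that J by (auto simp: carrier_diffpoly dp_rcompl_def intro: dp_polys_mono)
    then show ?thesis
      using that dp_times_dp_rcompl[OF I] by (simp add: dp_mult_eq_dp_times[OF I])
  qed
  ultimately show ?thesis
    unfolding right_corner_def using subring_nu_diffpoly[OF I J] by blast
qed

theorem lemma5p1:
  fixes I :: "'i set" and \<delta> :: "'i \<Rightarrow> 'a::ring_1 \<Rightarrow> 'a"
  assumes "I \<noteq> {}" and "countable I"
    and "\<forall>i\<in>I. is_derivation (\<delta> i)"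
  shows "(\<forall>J\<subseteq>I. right_corner (diffpoly I \<delta>) (diffpoly J \<delta>) \<and> left_corner (diffpoly I \<delta>) (diffpoly J \<delta>))
    \<and> (left_quasi_duo (diffpoly I \<delta>) \<longrightarrow> (\<forall>J\<subseteq>I. left_quasi_duo (diffpoly J \<delta>)))
    \<and> (right_quasi_duo (diffpoly I \<delta>) \<longrightarrow> (\<forall>J\<subseteq>I. right_quasi_duo (diffpoly J \<delta>)))"
proof -
  have I: "derivations_on I \<delta>" using assms(3) by (simp add: derivations_on_def)
  have corners:
      "right_corner (diffpoly I \<delta>) (diffpoly J \<delta>)" "left_corner (diffpoly I \<delta>) (diffpoly J \<delta>)"
    if "J \<subseteq> I" for J
    using right_corner_diffpoly[OF I that] left_corner_diffpoly[OF I that] by blast+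
  have ring: "ring (diffpoly I \<delta>)" by (rule ring_diffpoly[OF I])
  have one: "\<one>\<^bsub>diffpoly J \<delta>\<^esub> = \<one>\<^bsub>diffpoly I \<delta>\<^esub>" for J by simp
  show ?thesis
    using corners left_quasi_duo_right_corner[OF ring _ one]
      right_quasi_duo_left_corner[OF ring _ one]
    by blast
qed

end
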